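(* Under the standing setup, fix $i\in\{1,2\}$ and suppose $X^i$ is a Markov chain with respect to its own filtration $\mathbb F^{X^i}$ with generator $\Lambda^i(t)=[\lambda^i_{x^iy^i}(t)]_{x^i,y^i\in\mathcal X^i}$. Then $$Q^i_t\,\Lambda(t)\,C^{i,*}=\Lambda^i(t)$$ for Lebesgue-almost every $t\ge0$, in the sense that for every function $g$ on $\mathcal X^i$ and every $x^i\in\mathcal X^i$ with $\mathbb P(X^i_t=x^i)>0$, $(Q^i_t\Lambda(t)C^{i,*}g)(x^i)=\sum_{y^i\in\mathcal X^i}\lambda^i_{x^iy^i}(t)g(y^i)$. Equivalently (for $i=1$), for a.e. $t$ and such $x^1$, and all $y^1\neq x^1$, $$\sum_{x^2,y^2\in\mathcal X^2}\lambda^{x^1x^2}_{y^1y^2}(t)\,\mathbb P(X^2_t=x^2\mid X^1_t=x^1)=\lambda^1_{x^1y^1}(t).$$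
   Context: Standing setup: $(\Omega,\mathcal F,\mathbb P)$ is a probability space; $\mathcal X^n\subset\mathbb R$, $n=1,2$, are finite sets and $\mathcal X=\mathcal X^1\times\mathcal X^2$. $X=(X^1,X^2)$ is a càdlàg process with values in $\mathcal X$ which is a Markov chain in its natural filtration $\mathbb F^X$, with infinitesimal generator $\Lambda(t)=[\lambda^{x^1x^2}_{y^1y^2}(t)]$ (locally integrable, nonnegative off-diagonal, rows summing to $0$), acting on functions $f$ on $\mathcal X$ by $(\Lambda(t)f)(x)=\sum_{y}\lambda^x_y(t)f(y)$. For $i=1,2$ and $t\ge0$, the operator $Q^i_t$ maps functions $f$ on $\mathcal X$ to functions on $\mathcal X^i$ by $(Q^i_tf)(x^i)=\mathbb E_{\mathbb P}(f(X_t)\mid X^i_t=x^i)$. The extension operator $C^{i,*}$ maps a function $f^i$ on $\mathcal X^i$ to the function on $\mathcal X$ given by $(C^{i,*}f^i)(x^1,x^2)=f^i(x^i)$. *)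

theory Defs
  imports "HOL-Probability.Probability"
begin

text \<open>Generic state space 's; time is real, restricted to t \<ge> 0.
  A process is Y :: real \<Rightarrow> 'a \<Rightarrow> 's on the probability space M.\<close>

definition ev :: "'a measure \<Rightarrow> (real \<Rightarrow> 'a \<Rightarrow> 's) \<Rightarrow> real \<Rightarrow> 's \<Rightarrow> 'a set" where
  "ev M Y t y = {\<omega> \<in> space M. Y t \<omega> = y}"

definition nat_filt :: "'a measure \<Rightarrow> (real \<Rightarrow> 'a \<Rightarrow> 's) \<Rightarrow> real \<Rightarrow> 'a measure" where
  "nat_filt M Y s = sigma (space M) {ev M Y u y | u y. 0 \<le> u \<and> u \<le> s}"

definition gen_apply :: "'s set \<Rightarrow> (real \<Rightarrow> 's \<Rightarrow> 's \<Rightarrow> real) \<Rightarrow> real \<Rightarrow> ('s \<Rightarrow> real) \<Rightarrow> 's \<Rightarrow> real" where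
  "gen_apply S L t f x = (\<Sum>y\<in>S. L t x y * f y)"

definition is_generator :: "'s set \<Rightarrow> (real \<Rightarrow> 's \<Rightarrow> 's \<Rightarrow> real) \<Rightarrow> bool" where
  "is_generator S L \<longleftrightarrow>
     (\<forall>x\<in>S. \<forall>y\<in>S. \<forall>T\<ge>0. set_integrable lborel {0..T} (\<lambda>t. L t x y)) \<and>
     (\<forall>t\<ge>0. \<forall>x\<in>S. \<forall>y\<in>S. x \<noteq> y \<longrightarrow> 0 \<le> L t x y) \<and>
     (\<forall>t\<ge>0. \<forall>x\<in>S. (\<Sum>y\<in>S. L t x y) = 0)"

definition cadlag :: "'a measure \<Rightarrow> (real \<Rightarrow> 'a \<Rightarrow> 's::topological_space) \<Rightarrow> bool" where
  "cadlag M Y \<longleftrightarrow> (\<forall>\<omega>\<in>space M. \<forall>t\<ge>0.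
      continuous (at_right t) (\<lambda>u. Y u \<omega>) \<and>
      (0 < t \<longrightarrow> (\<exists>l. ((\<lambda>u. Y u \<omega>) \<longlongrightarrow> l) (at_left t))))"

text \<open>Y is a Markov chain with values in the finite set S, in its natural filtration,
  with infinitesimal generator L: Y is adapted, has the Markov property w.r.t. its
  natural filtration (E[f(Y_t) | F^Y_s] is a function of Y_s), and for every f on S the process
  f(Y_t) - \<integral>_0^t (L(u) f)(Y_u) du is an F^Y-martingale.\<close>
definition markov_chain_gen :: "'a measure \<Rightarrow> 's set \<Rightarrow> (real \<Rightarrow> 'a \<Rightarrow> 's) \<Rightarrow> (real \<Rightarrow> 's \<Rightarrow> 's \<Rightarrow> real) \<Rightarrow> bool" where
  "markov_chain_gen M S Y L \<longleftrightarrow>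
     finite S \<and> is_generator S L \<and>
     (\<forall>t\<ge>0. \<forall>\<omega>\<in>space M. Y t \<omega> \<in> S) \<and>
     (\<forall>t\<ge>0. \<forall>y. ev M Y t y \<in> sets M) \<and>
     (\<forall>s t (f::'s \<Rightarrow> real). 0 \<le> s \<and> s \<le> t \<longrightarrow>
        (\<exists>h::'s \<Rightarrow> real. \<forall>A\<in>sets (nat_filt M Y s).
           set_lebesgue_integral M A (\<lambda>\<omega>. f (Y t \<omega>)) = set_lebesgue_integral M A (\<lambda>\<omega>. h (Y s \<omega>)))) \<and>
     (\<forall>s t (f::'s \<Rightarrow> real). 0 \<le> s \<and> s \<le> t \<longrightarrow>
        integrable M (\<lambda>\<omega>. set_lebesgue_integral lborel {s..t} (\<lambda>u. gen_apply S L u f (Y u \<omega>))) \<and>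
        (\<forall>A\<in>sets (nat_filt M Y s).
           set_lebesgue_integral M A (\<lambda>\<omega>. f (Y t \<omega>) - f (Y s \<omega>)
              - set_lebesgue_integral lborel {s..t} (\<lambda>u. gen_apply S L u f (Y u \<omega>))) = 0))"

text \<open>(Q^i_t f)(x) = E(f(X_t) | Y_t = x) with Y = X^i (elementary conditional expectation,
  meaningful when P(Y_t = x) > 0).\<close>
definition Qop :: "'a measure \<Rightarrow> (real \<Rightarrow> 'a \<Rightarrow> 'b) \<Rightarrow> (real \<Rightarrow> 'a \<Rightarrow> 's) \<Rightarrow> real \<Rightarrow> ('b \<Rightarrow> real) \<Rightarrow> 's \<Rightarrow> real" where
  "Qop M X Y t f x = (\<integral>\<omega>. indicator (ev M Y t x) \<omega> * f (X t \<omega>) \<partial>M) / measure M (ev M Y t x)"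

definition coord :: "nat \<Rightarrow> real \<times> real \<Rightarrow> real" where
  "coord i p = (if i = 1 then fst p else snd p)"

definition Cext :: "nat \<Rightarrow> (real \<Rightarrow> real) \<Rightarrow> real \<times> real \<Rightarrow> real" where
  "Cext i g = (\<lambda>p. g (coord i p))"

end

theory Submission
  imports Defs
begin

(*
  Let X be a Markov chain with generator L and Y = cd o X a projection that is itself a Markov
  chain with generator Li.  For states x, y of Y the defect
     defect x y u = E[1{Y_u = x} ((L(u) 1{cd = y})(X_u) - (Li(u) 1{y})(Y_u))]
  vanishes for a.e. u exactly when the theorem holds (by linearity in the test function g).
  1. Both generators compensate the process 1{Y_t = y}; Dynkin's formula against the event
     {Y_s = x}, observable in both natural filtrations, plus Fubini (via right-continuity of the
     paths) shows that the defect with that event frozen at time s integrates to 0 over [s, t].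
  2. Unfreezing the event costs at most the probability of a jump of X in [s, t], which Dynkin's
     formula bounds by the integrated jump rate; so |integral of the defect over [s, s+h]| is at
     most the product of the integrals of jump_rate and defect_size over [s, s+h].
  3. By Lebesgue's differentiation theorem such a bound forces the defect to vanish a.e.
  The file proves 3 first, then Fubini for finite-valued right-continuous processes, then 1 and 2
  in the locale projected_chain, and obtains the theorem by interpreting that locale.
*)


section \<open>Locally integrable functions on the half-line\<close>

text \<open>Lebesgue's differentiation theorem on [0, \<infinity>): the right averages of a locally integrable
  function converge to it almost everywhere.\<close>
lemma local_average_limit:
  fixes f :: "real \<Rightarrow> real"
  assumes loc: "\<And>T. 0 \<le> T \<Longrightarrow> set_integrable lborel {0..T} f"
  shows "AE t in lborel. 0 \<le> t \<longrightarrow>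
           ((\<lambda>h. set_lebesgue_integral lborel {t..t+h} f / h) \<longlongrightarrow> f t) (at_right 0)"
proof -
  define g where "g = (\<lambda>u. if 0 \<le> u then f u else 0)"
  have g_si: "set_integrable lborel {a..b} g" for a b
  proof -
    have "integrable lborel (\<lambda>u. indicator {0..max 0 b} u * f u * indicator {a..b} u)"
      using loc[of "max 0 b"] unfolding set_integrable_def
      by (intro integrable_real_mult_indicator) auto
    then show ?thesis unfolding set_integrable_def
      by (rule Bochner_Integration.integrable_cong[THEN iffD1, rotated 2]) (auto simp: g_def indicator_def)
  qed
  obtain N where N: "negligible N" and avg: "\<And>x e. x \<notin> N \<Longrightarrow> 0 < e \<Longrightarrow>
      \<exists>d>0. \<forall>h. 0 < h \<and> h < d \<longrightarrow> norm (integral (cbox x (x + h *\<^sub>R One)) g /\<^sub>R h ^ DIM(real) - g x) < e"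
    using integrable_ccontinuous_explicit[of g] set_borel_integral_eq_integral(1)[OF g_si] by auto
  have "AE t in lebesgue. t \<notin> N"
    using N by (intro AE_not_in) (simp add: negligible_iff_null_sets)
  then have "AE t in lborel. t \<notin> N" by (simp add: AE_completion_iff)
  then show ?thesis
  proof eventually_elim
    case (elim t)
    show ?case
    proof
      assume t: "0 \<le> t"
      have eq: "set_lebesgue_integral lborel {t..t+h} f / h = integral {t..t+h} g /\<^sub>R h" for h
      proof -
        have "set_lebesgue_integral lborel {t..t+h} f = set_lebesgue_integral lborel {t..t+h} g"
          using t unfolding set_lebesgue_integral_def
          by (intro Bochner_Integration.integral_cong) (auto simp: g_def indicator_def)
        then show ?thesis using set_borel_integral_eq_integral(2)[OF g_si] by (simp add: divide_inverse_commute)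
      qed
      show "((\<lambda>h. set_lebesgue_integral lborel {t..t+h} f / h) \<longlongrightarrow> f t) (at_right 0)"
        unfolding tendsto_iff eventually_at_right_field
      proof (intro allI impI)
        fix e :: real assume "0 < e"
        then obtain d where "d > 0" and d: "\<And>h. 0 < h \<Longrightarrow> h < d \<Longrightarrow> \<bar>integral {t..t+h} g /\<^sub>R h - g t\<bar> < e"
          using avg[OF elim] by fastforce
        then show "\<exists>b>0. \<forall>h>0. h < b \<longrightarrow> dist (set_lebesgue_integral lborel {t..t+h} f / h) (f t) < e"
          using t by (auto simp: eq dist_real_def g_def)
      qed
    qed
  qed
qed

text \<open>If the integral of \<Phi> over every short interval [s, s+h] is bounded by the product of the
  integrals of two locally integrable functions over the same interval, then \<Phi> vanishes a.e.:
  dividing by h, the left side tends to |\<Phi> s| and the right side to \<kappa> s * 0.\<close>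
lemma ae_zero_from_local_bound:
  fixes \<Phi> \<kappa> C :: "real \<Rightarrow> real"
  assumes loc: "\<And>T. 0 \<le> T \<Longrightarrow> set_integrable lborel {0..T} \<Phi>"
      "\<And>T. 0 \<le> T \<Longrightarrow> set_integrable lborel {0..T} \<kappa>"
      "\<And>T. 0 \<le> T \<Longrightarrow> set_integrable lborel {0..T} C"
    and bound: "\<And>s h. 0 \<le> s \<Longrightarrow> 0 \<le> h \<Longrightarrow>
       \<bar>set_lebesgue_integral lborel {s..s+h} \<Phi>\<bar> \<le>
         set_lebesgue_integral lborel {s..s+h} \<kappa> * set_lebesgue_integral lborel {s..s+h} C"
  shows "AE t in lborel. 0 \<le> t \<longrightarrow> \<Phi> t = 0"
proof -
  let ?avg = "\<lambda>f t. ((\<lambda>h. set_lebesgue_integral lborel {t..t+h} f / h) \<longlongrightarrow> f t) (at_right 0)"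
  have "AE t in lborel. 0 \<le> t \<longrightarrow> ?avg \<Phi> t" "AE t in lborel. 0 \<le> t \<longrightarrow> ?avg \<kappa> t"
    "AE t in lborel. 0 \<le> t \<longrightarrow> ?avg C t"
    by (rule local_average_limit, rule loc, assumption)+
  then show ?thesis
  proof eventually_elim
    case (elim t)
    show ?case
    proof
      assume t: "0 \<le> t"
      let ?I = "\<lambda>f h. set_lebesgue_integral lborel {t..t+h} f"
      have pos: "\<forall>\<^sub>F h in at_right 0. 0 < (h::real)"
        by (simp add: eventually_at_right_field) (meson zero_less_one)
      have "((\<lambda>h. h * (?I C h / h)) \<longlongrightarrow> 0 * C t) (at_right 0)"
        using elim t by (intro tendsto_mult tendsto_ident_at) auto
      then have "((\<lambda>h. h * (?I C h / h)) \<longlongrightarrow> 0) (at_right 0)" by simp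
      moreover have "\<forall>\<^sub>F h in at_right 0. h * (?I C h / h) = ?I C h"
        using pos by eventually_elim simp
      ultimately have C_vanishes: "(?I C \<longlongrightarrow> 0) (at_right 0)" by (rule Lim_transform_eventually)
      have "((\<lambda>h. ?I \<kappa> h / h * ?I C h) \<longlongrightarrow> \<kappa> t * 0) (at_right 0)"
        using elim t C_vanishes by (intro tendsto_mult) auto
      moreover have "((\<lambda>h. \<bar>?I \<Phi> h / h\<bar>) \<longlongrightarrow> \<bar>\<Phi> t\<bar>) (at_right 0)"
        using elim t by (intro tendsto_rabs) auto
      moreover have "\<forall>\<^sub>F h in at_right 0. \<bar>?I \<Phi> h / h\<bar> \<le> ?I \<kappa> h / h * ?I C h"
        using pos
      proof eventually_elim
        case (elim h)
        have "\<bar>?I \<Phi> h / h\<bar> = \<bar>?I \<Phi> h\<bar> / h" using elim by (simp add: abs_divide)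
        also have "\<dots> \<le> ?I \<kappa> h * ?I C h / h"
          using bound[OF t, of h] elim by (intro divide_right_mono) simp_all
        finally show ?case by simp
      qed
      ultimately have "\<bar>\<Phi> t\<bar> \<le> \<kappa> t * 0" by (rule tendsto_le[OF trivial_limit_at_right_real])
      then show "\<Phi> t = 0" by simp
    qed
  qed
qed


lemma set_integrable_sum:
  fixes f :: "'i \<Rightarrow> 'b \<Rightarrow> real"
  assumes "finite I" "\<And>i. i \<in> I \<Longrightarrow> set_integrable M A (f i)"
  shows "set_integrable M A (\<lambda>u. \<Sum>i\<in>I. f i u)"
proof -
  have "integrable M (\<lambda>x. \<Sum>i\<in>I. indicator A x *\<^sub>R f i x)"
    using assms unfolding set_integrable_def by (intro Bochner_Integration.integrable_sum) auto
  then show ?thesis unfolding set_integrable_def by (simp add: sum_distrib_left)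
qed

lemma set_integral_sum:
  fixes f :: "'i \<Rightarrow> 'b \<Rightarrow> real"
  assumes "finite I" "\<And>i. i \<in> I \<Longrightarrow> set_integrable M A (f i)"
  shows "set_lebesgue_integral M A (\<lambda>u. \<Sum>i\<in>I. f i u) = (\<Sum>i\<in>I. set_lebesgue_integral M A (f i))"
proof -
  have "set_lebesgue_integral M A (\<lambda>u. \<Sum>i\<in>I. f i u) = (\<integral>x. (\<Sum>i\<in>I. indicator A x *\<^sub>R f i x) \<partial>M)"
    unfolding set_lebesgue_integral_def by (simp add: sum_distrib_left)
  also have "\<dots> = (\<Sum>i\<in>I. set_lebesgue_integral M A (f i))"
    using assms unfolding set_integrable_def set_lebesgue_integral_def
    by (intro Bochner_Integration.integral_sum) auto
  finally show ?thesis .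
qed

lemma set_integral_eq_of_diff_zero:
  fixes a b :: "'a \<Rightarrow> real"
  assumes "integrable M a" "integrable M b" "A \<in> sets M"
    and "set_lebesgue_integral M A (\<lambda>\<omega>. a \<omega> - b \<omega>) = 0"
  shows "(\<integral>\<omega>. indicator A \<omega> * b \<omega> \<partial>M) = (\<integral>\<omega>. indicator A \<omega> * a \<omega> \<partial>M)"
proof -
  have "set_integrable M A a" "set_integrable M A b"
    using integrable_mult_indicator[OF assms(3) assms(1)] integrable_mult_indicator[OF assms(3) assms(2)]
    unfolding set_integrable_def by auto
  from set_integral_diff(2)[OF this] assms(4) show ?thesis
    by (simp add: set_lebesgue_integral_def)
qed

lemma (in prob_space) prob_diff_le_disagreement:
  assumes "P \<in> sets M" "Q \<in> sets M" "D \<in> sets M" "P - D \<subseteq> Q" "Q - D \<subseteq> P"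
  shows "\<bar>prob P - prob Q\<bar> \<le> prob D"
proof -
  have "prob P \<le> prob (Q \<union> D)" "prob Q \<le> prob (P \<union> D)"
    using assms by (auto intro!: finite_measure_mono)
  moreover have "prob (Q \<union> D) \<le> prob Q + prob D" "prob (P \<union> D) \<le> prob P + prob D"
    using assms by (auto intro!: measure_Un_le)
  ultimately show ?thesis by linarith
qed


lemma generator_entry_set_integrable:
  assumes "is_generator S L" "x \<in> S" "y \<in> S" "0 \<le> s" "s \<le> t"
  shows "set_integrable lborel {s..t} (\<lambda>u. L u x y)"
proof -
  have "set_integrable lborel {0..t} (\<lambda>u. L u x y)"
    using assms unfolding is_generator_def by (meson order_trans)
  then show ?thesis by (rule set_integrable_subset) (use assms(4) in auto)
qed

lemma gen_apply_set_integrable: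
  assumes "is_generator S L" "finite S" "x \<in> S" "0 \<le> s" "s \<le> t"
  shows "set_integrable lborel {s..t} (\<lambda>u. gen_apply S L u f x)"
  unfolding gen_apply_def
proof (rule set_integrable_sum[OF assms(2)])
  fix w assume "w \<in> S"
  from generator_entry_set_integrable[OF assms(1,3) this assms(4,5)]
  show "set_integrable lborel {s..t} (\<lambda>u. L u x w * f w)" by (rule set_integrable_mult_left)
qed

lemma ev_in_nat_filt: "0 \<le> u \<Longrightarrow> u \<le> s \<Longrightarrow> ev M Y u y \<in> sets (nat_filt M Y s)"
  unfolding nat_filt_def by (rule in_measure_of) (unfold ev_def, blast+)


section \<open>Finite-valued right-continuous processes\<close>

lemma right_grid_limit:
  fixes u :: real
  defines "d \<equiv> \<lambda>n::nat. (of_int \<lfloor>real (Suc n) * u\<rfloor> + 1) / real (Suc n)"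
  shows "\<And>n. u < d n" and "filterlim d (at_right u) sequentially"
proof -
  show gt: "u < d n" for n
  proof -
    have "real (Suc n) * u < of_int \<lfloor>real (Suc n) * u\<rfloor> + 1" by linarith
    then show ?thesis unfolding d_def by (simp add: field_simps)
  qed
  have le: "d n \<le> u + inverse (real (Suc n))" for n
  proof -
    have "d n \<le> (real (Suc n) * u + 1) / real (Suc n)" unfolding d_def
      by (intro divide_right_mono) linarith+
    also have "\<dots> = u + inverse (real (Suc n))" by (simp add: field_simps)
    finally show ?thesis .
  qed
  have "d \<longlonglongrightarrow> u"
  proof (rule tendsto_sandwich[of "\<lambda>n. u" _ _ "\<lambda>n. u + inverse (real (Suc n))"])
    show "(\<lambda>n. u + inverse (real (Suc n))) \<longlonglongrightarrow> u"
      using tendsto_add[OF tendsto_const LIMSEQ_inverse_real_of_nat, of u] by simp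
  qed (use gt le in \<open>auto intro: less_imp_le always_eventually\<close>)
  then show "filterlim d (at_right u) sequentially"
    by (rule tendsto_imp_filterlim_at_right) (use gt in \<open>auto intro: always_eventually\<close>)
qed

lemma lborel_pair_sigma_finite:
  assumes "prob_space M" shows "pair_sigma_finite (lborel::real measure) M"
  using assms by (intro pair_sigma_finite.intro sigma_finite_lborel) (simp add: prob_space_imp_sigma_finite)

lemma (in prob_space) integrable_pair_dominated:
  fixes H :: "real \<times> 'a \<Rightarrow> real"
  assumes H: "H \<in> borel_measurable (lborel \<Otimes>\<^sub>M M)" and B: "integrable lborel B"
    and bound: "\<And>u \<omega>. \<bar>H (u, \<omega>)\<bar> \<le> B u"
  shows "integrable (lborel \<Otimes>\<^sub>M M) H"
proof (rule pair_sigma_finite.Fubini_integrable[OF lborel_pair_sigma_finite[OF prob_space_axioms] H])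
  have section_meas: "(\<lambda>\<omega>. H (u, \<omega>)) \<in> borel_measurable M" for u
    using measurable_Pair2[OF H, of u] by simp
  have B_nonneg: "0 \<le> B u" for u using bound[of u] abs_ge_zero order_trans by blast
  have "norm (\<integral>\<omega>. norm (H (u, \<omega>)) \<partial>M) \<le> norm (B u)" for u
  proof -
    have "(\<integral>\<omega>. norm (H (u, \<omega>)) \<partial>M) \<le> (\<integral>\<omega>. B u \<partial>M)"
      using bound[of u] section_meas[of u] B_nonneg[of u]
      by (intro integral_mono integrable_const_bound[where B="B u"]) auto
    then show ?thesis using B_nonneg[of u] by (simp add: prob_space)
  qed
  moreover have "(\<lambda>u. \<integral>\<omega>. norm (H (u, \<omega>)) \<partial>M) \<in> borel_measurable lborel"
    using H by (intro sigma_finite_measure.borel_measurable_lebesgue_integral[of M])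
      (auto intro: sigma_finite_measure_axioms)
  ultimately show "integrable lborel (\<lambda>u. \<integral>\<omega>. norm (H (u, \<omega>)) \<partial>M)"
    by (intro Bochner_Integration.integrable_bound[OF B]) (auto simp: B_nonneg)
  show "AE u in lborel. integrable M (\<lambda>\<omega>. H (u, \<omega>))"
    using bound section_meas B_nonneg by (intro AE_I2 integrable_const_bound[where B="B _"]) auto
qed

locale finite_rc_process = prob_space M for M :: "'a measure" +
  fixes S :: "'s::euclidean_space set" and X :: "real \<Rightarrow> 'a \<Rightarrow> 's"
  assumes finite_states: "finite S"
    and in_states: "\<And>t \<omega>. 0 \<le> t \<Longrightarrow> \<omega> \<in> space M \<Longrightarrow> X t \<omega> \<in> S"
    and state_event: "\<And>t z. 0 \<le> t \<Longrightarrow> ev M X t z \<in> sets M"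
    and right_cont: "\<And>t \<omega>. 0 \<le> t \<Longrightarrow> \<omega> \<in> space M \<Longrightarrow> continuous (at_right t) (\<lambda>u. X u \<omega>)"
begin

lemma sum_state_indicator:
  fixes F :: "'s \<Rightarrow> 'b::real_vector"
  assumes "0 \<le> t" "\<omega> \<in> space M"
  shows "(\<Sum>z\<in>S. indicator (ev M X t z) \<omega> *\<^sub>R F z) = F (X t \<omega>)"
proof -
  have "(\<Sum>z\<in>S. indicator (ev M X t z) \<omega> *\<^sub>R F z) = (\<Sum>z\<in>S. if X t \<omega> = z then F z else 0)"
    using assms(2) by (intro sum.cong) (auto simp: indicator_def ev_def)
  also have "\<dots> = F (X t \<omega>)" using finite_states in_states[OF assms] by (simp add: sum.delta)
  finally show ?thesis .
qed

lemma process_measurable: assumes "0 \<le> t" shows "X t \<in> borel_measurable M"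
proof -
  have "(\<lambda>\<omega>. \<Sum>z\<in>S. indicator (ev M X t z) \<omega> *\<^sub>R z) \<in> borel_measurable M"
    using state_event[OF assms] by measurable
  then show ?thesis
    by (rule measurable_cong[THEN iffD1, rotated]) (simp add: sum_state_indicator[OF assms])
qed

lemma indicator_state_expansion:
  fixes F :: "'s \<Rightarrow> real"
  assumes "0 \<le> t" "\<omega> \<in> space M"
  shows "indicator A \<omega> * F (X t \<omega>) = (\<Sum>z\<in>S. F z * indicator (A \<inter> ev M X t z) \<omega>)"
  using sum_state_indicator[OF assms, of "\<lambda>z. indicator A \<omega> * F z"]
  by (simp add: indicator_inter_arith sum_distrib_left mult_ac)

lemma integrable_state_function:
  fixes F :: "'s \<Rightarrow> real"
  assumes "0 \<le> t"
  shows "integrable M (\<lambda>\<omega>. F (X t \<omega>))"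
proof -
  have "integrable M (\<lambda>\<omega>. \<Sum>z\<in>S. F z * indicator (space M \<inter> ev M X t z) \<omega>)"
    using state_event[OF assms] by (intro Bochner_Integration.integrable_sum integrable_mult_right
        integrable_real_indicator) (auto simp: less_top[symmetric])
  then show ?thesis
    by (rule Bochner_Integration.integrable_cong[THEN iffD1, rotated 2])
      (use indicator_state_expansion[OF assms, of _ "space M" F] in auto)
qed

lemma integral_indicator_state:
  fixes F :: "'s \<Rightarrow> real"
  assumes "0 \<le> t" "A \<in> sets M"
  shows "(\<integral>\<omega>. indicator A \<omega> * F (X t \<omega>) \<partial>M) = (\<Sum>z\<in>S. F z * prob (A \<inter> ev M X t z))"
proof -
  have sets: "A \<inter> ev M X t z \<in> sets M" for z using assms state_event by auto
  have "(\<integral>\<omega>. indicator A \<omega> * F (X t \<omega>) \<partial>M) = (\<integral>\<omega>. (\<Sum>z\<in>S. F z * indicator (A \<inter> ev M X t z) \<omega>) \<partial>M)"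
    using indicator_state_expansion[OF assms(1)] by (intro Bochner_Integration.integral_cong) auto
  also have "\<dots> = (\<Sum>z\<in>S. F z * prob (A \<inter> ev M X t z))"
    using sets by (subst Bochner_Integration.integral_sum) (auto simp: less_top[symmetric])
  finally show ?thesis .
qed

text \<open>Joint measurability in (time, sample) of the path, clamped to [0, \<infinity>): approximate the
  time from the right by grid points, where measurability is clear, and use right-continuity.\<close>
lemma clamped_path_measurable:
  "(\<lambda>p. X (max 0 (fst p)) (snd p)) \<in> borel_measurable ((lborel::real measure) \<Otimes>\<^sub>M M)"
proof -
  define d where "d = (\<lambda>(n::nat) (u::real). (of_int \<lfloor>real (Suc n) * u\<rfloor> + 1) / real (Suc n))"
  have grid_meas: "(\<lambda>p. X (max 0 (d n (max 0 (fst p)))) (snd p)) \<in> borel_measurable ((lborel::real measure) \<Otimes>\<^sub>M M)"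
    for n
  proof -
    have floor_meas: "(\<lambda>p. \<lfloor>real (Suc n) * max 0 (fst p)\<rfloor>) \<in> ((lborel::real measure) \<Otimes>\<^sub>M M) \<rightarrow>\<^sub>M count_space UNIV"
      by (rule measurable_compose[OF _ measurable_real_floor]) measurable
    have grid_point_meas: "(\<lambda>p. X (max 0 ((of_int k + 1) / real (Suc n))) (snd p))
        \<in> borel_measurable ((lborel::real measure) \<Otimes>\<^sub>M M)" for k :: int
      by (rule measurable_compose[OF measurable_snd process_measurable]) simp
    show ?thesis
      using measurable_compose_countable[where f = "\<lambda>k p. X (max 0 ((of_int k + 1) / real (Suc n))) (snd p)",
          OF grid_point_meas floor_meas]
      by (simp add: d_def)
  qed
  show ?thesis
  proof (rule borel_measurable_LIMSEQ_metric[OF grid_meas])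
    fix p :: "real \<times> 'a" assume "p \<in> space (lborel \<Otimes>\<^sub>M M)"
    then have \<omega>: "snd p \<in> space M" by (auto simp: space_pair_measure)
    define u where "u = max 0 (fst p)"
    have "max 0 (d n u) = d n u" for n
      using right_grid_limit(1)[of u n] by (simp add: d_def u_def)
    moreover have "((\<lambda>v. X v (snd p)) \<longlongrightarrow> X u (snd p)) (at_right u)"
      using right_cont[OF _ \<omega>, of u] by (simp add: continuous_within u_def)
    from filterlim_compose[OF this right_grid_limit(2)[of u]]
    have "(\<lambda>n. X (d n u) (snd p)) \<longlonglongrightarrow> X u (snd p)" by (simp add: d_def)
    ultimately show "(\<lambda>n. X (max 0 (d n (max 0 (fst p)))) (snd p)) \<longlonglongrightarrow> X (max 0 (fst p)) (snd p)"
      by (simp add: u_def)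
  qed
qed

text \<open>The integrand 1_A(\<omega>) g(X_u(\<omega>), u) on time \<times> sample space, written as a sum over the
  states so that joint measurability follows from that of the clamped path.\<close>
definition path_integrand :: "'a set \<Rightarrow> ('s \<Rightarrow> real \<Rightarrow> real) \<Rightarrow> real \<times> 'a \<Rightarrow> real" where
  "path_integrand A g p =
     indicator A (snd p) * (\<Sum>z\<in>S. g z (fst p) * indicator {z} (X (max 0 (fst p)) (snd p)))"

lemma path_integrand_integrable:
  assumes A: "A \<in> sets M" and g_int: "\<And>z. z \<in> S \<Longrightarrow> integrable lborel (g z)"
  shows "integrable (lborel \<Otimes>\<^sub>M M) (path_integrand A g)"
proof -
  have meas: "path_integrand A g \<in> borel_measurable (lborel \<Otimes>\<^sub>M M)"
    unfolding path_integrand_def[abs_def]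
  proof (intro borel_measurable_times borel_measurable_sum)
    show "(\<lambda>p. indicator A (snd p)) \<in> borel_measurable (lborel \<Otimes>\<^sub>M M)"
      using A by measurable
    fix z assume "z \<in> S"
    show "(\<lambda>p. g z (fst p)) \<in> borel_measurable (lborel \<Otimes>\<^sub>M M)"
      using g_int[OF \<open>z \<in> S\<close>] by (intro measurable_compose[OF measurable_fst]) auto
    show "(\<lambda>p. indicator {z} (X (max 0 (fst p)) (snd p)) :: real) \<in> borel_measurable (lborel \<Otimes>\<^sub>M M)"
      by (rule measurable_compose[OF clamped_path_measurable]) simp
  qed
  have "\<bar>path_integrand A g p\<bar> \<le> (\<Sum>z\<in>S. \<bar>g z (fst p)\<bar>)" for p
  proof -
    let ?Z = "X (max 0 (fst p)) (snd p)"
    have "\<bar>path_integrand A g p\<bar> \<le> (\<Sum>z\<in>S. \<bar>g z (fst p) * indicator {z} ?Z\<bar>)"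
      unfolding path_integrand_def using sum_abs[of "\<lambda>z. g z (fst p) * indicator {z} ?Z" S]
      by (auto simp: indicator_def)
    also have "\<dots> \<le> (\<Sum>z\<in>S. \<bar>g z (fst p)\<bar>)"
      by (intro sum_mono) (auto simp: indicator_def abs_mult)
    finally show ?thesis .
  qed
  then show ?thesis
    using g_int by (intro integrable_pair_dominated[OF meas, of "\<lambda>u. \<Sum>z\<in>S. \<bar>g z u\<bar>"]) auto
qed

lemma time_integral_exchange:
  fixes G :: "real \<Rightarrow> 's \<Rightarrow> real"
  assumes st: "0 \<le> s" "s \<le> t" and A: "A \<in> sets M"
    and G_int: "\<And>z. z \<in> S \<Longrightarrow> set_integrable lborel {s..t} (\<lambda>u. G u z)"
  defines "R \<equiv> \<lambda>u. \<Sum>z\<in>S. G u z * prob (A \<inter> ev M X u z)"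
  shows "(\<integral>\<omega>. indicator A \<omega> * set_lebesgue_integral lborel {s..t} (\<lambda>u. G u (X u \<omega>)) \<partial>M)
        = set_lebesgue_integral lborel {s..t} R"
    and "set_integrable lborel {s..t} R"
proof -
  define g where "g = (\<lambda>z u. indicator {s..t} u * G u z)"
  define H where "H = path_integrand A g"
  have H_int: "integrable (lborel \<Otimes>\<^sub>M M) H"
    unfolding H_def using A G_int
    by (intro path_integrand_integrable) (auto simp: g_def set_integrable_def)
  have path_section: "(\<integral>u. H (u, \<omega>) \<partial>lborel)
      = indicator A \<omega> * set_lebesgue_integral lborel {s..t} (\<lambda>u. G u (X u \<omega>))" if "\<omega> \<in> space M" for \<omega>
  proof -
    have "(\<Sum>z\<in>S. g z u * indicator {z} (X (max 0 u) \<omega>)) = indicator {s..t} u * G u (X u \<omega>)" for u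
      using sum_state_indicator[OF _ that, of u "\<lambda>z. g z u"] st that
      by (cases "u \<in> {s..t}") (auto simp: g_def indicator_def ev_def mult_ac)
    then show ?thesis unfolding H_def path_integrand_def set_lebesgue_integral_def by simp
  qed
  have time_section: "(\<integral>\<omega>. H (u, \<omega>) \<partial>M) = indicator {s..t} u * R u" for u
  proof (cases "u \<in> {s..t}")
    case True
    define F where "F = (\<lambda>y. \<Sum>z\<in>S. g z u * indicator {z} y)"
    have "F z = G u z" if "z \<in> S" for z
      using True that finite_states by (simp add: F_def g_def indicator_def if_distrib cong: if_cong)
    moreover have "(\<integral>\<omega>. H (u, \<omega>) \<partial>M) = (\<Sum>z\<in>S. F z * prob (A \<inter> ev M X u z))"
      unfolding H_def path_integrand_def F_def using True st integral_indicator_state[OF _ A, of u F]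
      by (simp add: F_def)
    ultimately show ?thesis using True by (simp add: R_def)
  qed (simp add: H_def path_integrand_def g_def)
  have "(\<integral>\<omega>. indicator A \<omega> * set_lebesgue_integral lborel {s..t} (\<lambda>u. G u (X u \<omega>)) \<partial>M)
      = (\<integral>\<omega>. (\<integral>u. H (u, \<omega>) \<partial>lborel) \<partial>M)"
    using path_section by (intro Bochner_Integration.integral_cong) auto
  also have "\<dots> = (\<integral>u. (\<integral>\<omega>. H (u, \<omega>) \<partial>M) \<partial>lborel)"
    using pair_sigma_finite.Fubini_integral[OF lborel_pair_sigma_finite[OF prob_space_axioms],
        of "\<lambda>u \<omega>. H (u, \<omega>)"] H_int
    by simp
  finally show "(\<integral>\<omega>. indicator A \<omega> * set_lebesgue_integral lborel {s..t} (\<lambda>u. G u (X u \<omega>)) \<partial>M)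
        = set_lebesgue_integral lborel {s..t} R"
    by (simp add: time_section set_lebesgue_integral_def)
  have "integrable lborel (\<lambda>u. (\<integral>\<omega>. H (u, \<omega>) \<partial>M))"
    using pair_sigma_finite.integrable_fst'[OF lborel_pair_sigma_finite[OF prob_space_axioms] H_int]
    by simp
  then show "set_integrable lborel {s..t} R" unfolding set_integrable_def time_section by simp
qed

end


section \<open>A Markov chain together with a Markov projection of it\<close>

locale projected_chain = prob_space M for M :: "'a measure" +
  fixes S :: "'s::euclidean_space set" and X :: "real \<Rightarrow> 'a \<Rightarrow> 's"
    and L :: "real \<Rightarrow> 's \<Rightarrow> 's \<Rightarrow> real"
    and Si :: "'r set" and Y :: "real \<Rightarrow> 'a \<Rightarrow> 'r" and Li :: "real \<Rightarrow> 'r \<Rightarrow> 'r \<Rightarrow> real"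
    and cd :: "'s \<Rightarrow> 'r"
  assumes markov_X: "markov_chain_gen M S X L"
    and markov_Y: "markov_chain_gen M Si Y Li"
    and right_cont_X: "\<And>t \<omega>. 0 \<le> t \<Longrightarrow> \<omega> \<in> space M \<Longrightarrow> continuous (at_right t) (\<lambda>u. X u \<omega>)"
    and Y_eq: "\<And>t \<omega>. Y t \<omega> = cd (X t \<omega>)"
    and cd_states: "\<And>z. z \<in> S \<Longrightarrow> cd z \<in> Si"
begin

sublocale finite_rc_process M S X
  using markov_X right_cont_X by unfold_locales (auto simp: markov_chain_gen_def)

lemma generator_X: "is_generator S L"
  and generator_Y: "is_generator Si Li"
  and finite_Si: "finite Si"
  using markov_X markov_Y by (auto simp: markov_chain_gen_def)

lemma Y_event: "0 \<le> t \<Longrightarrow> ev M Y t x \<in> sets M"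
  using markov_Y by (auto simp: markov_chain_gen_def)

lemma Y_event_in_filtrations:
  assumes "0 \<le> s"
  shows "ev M Y s x \<in> sets (nat_filt M X s)" "ev M Y s x \<in> sets (nat_filt M Y s)"
proof -
  have "ev M Y s x = (\<Union>z\<in>{z\<in>S. cd z = x}. ev M X s z)"
    using in_states[OF assms] by (auto simp: ev_def Y_eq)
  also have "\<dots> \<in> sets (nat_filt M X s)"
    using finite_states assms by (intro sets.finite_UN ev_in_nat_filt) auto
  finally show "ev M Y s x \<in> sets (nat_filt M X s)" .
  show "ev M Y s x \<in> sets (nat_filt M Y s)" using assms by (rule ev_in_nat_filt) simp
qed

lemma dynkin_X:
  fixes f :: "'s \<Rightarrow> real"
  assumes st: "0 \<le> s" "s \<le> t" and A: "A \<in> sets (nat_filt M X s)" "A \<in> sets M"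
  shows "(\<integral>\<omega>. indicator A \<omega> * set_lebesgue_integral lborel {s..t} (\<lambda>u. gen_apply S L u f (X u \<omega>)) \<partial>M)
       = (\<integral>\<omega>. indicator A \<omega> * (f (X t \<omega>) - f (X s \<omega>)) \<partial>M)"
  using markov_X st A integrable_state_function[of t f] integrable_state_function[of s f]
  unfolding markov_chain_gen_def
  by (intro set_integral_eq_of_diff_zero) (auto simp: diff_diff_eq[symmetric])

lemma dynkin_Y:
  fixes f :: "'r \<Rightarrow> real"
  assumes st: "0 \<le> s" "s \<le> t" and A: "A \<in> sets (nat_filt M Y s)" "A \<in> sets M"
  shows "(\<integral>\<omega>. indicator A \<omega> * set_lebesgue_integral lborel {s..t} (\<lambda>u. gen_apply Si Li u f (Y u \<omega>)) \<partial>M)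
       = (\<integral>\<omega>. indicator A \<omega> * (f (Y t \<omega>) - f (Y s \<omega>)) \<partial>M)"
  using markov_Y st A integrable_state_function[of t "f \<circ> cd"] integrable_state_function[of s "f \<circ> cd"]
  unfolding markov_chain_gen_def
  by (intro set_integral_eq_of_diff_zero) (auto simp: diff_diff_eq[symmetric] Y_eq)

definition lift_gen :: "'r \<Rightarrow> real \<Rightarrow> 's \<Rightarrow> real" where
  "lift_gen y u z = gen_apply S L u (\<lambda>w. if cd w = y then 1 else 0) z"

definition proj_gen :: "'r \<Rightarrow> real \<Rightarrow> 's \<Rightarrow> real" where
  "proj_gen y u z = gen_apply Si Li u (\<lambda>v. if v = y then 1 else 0) (cd z)"

definition gen_defect :: "'r \<Rightarrow> real \<Rightarrow> 's \<Rightarrow> real" where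
  "gen_defect y u z = lift_gen y u z - proj_gen y u z"

text \<open>The defect E[1{Y_u = x} gen_defect y u (X_u)], whose a.e. vanishing is the theorem, and its
  variant with the event frozen at an earlier time s.\<close>
definition defect :: "'r \<Rightarrow> 'r \<Rightarrow> real \<Rightarrow> real" where
  "defect x y u = (\<Sum>z\<in>S. gen_defect y u z * prob (ev M Y u x \<inter> ev M X u z))"

definition frozen_defect :: "'r \<Rightarrow> 'r \<Rightarrow> real \<Rightarrow> real \<Rightarrow> real" where
  "frozen_defect x y s u = (\<Sum>z\<in>S. gen_defect y u z * prob (ev M Y s x \<inter> ev M X u z))"

definition jump_rate :: "real \<Rightarrow> real" where
  "jump_rate u = (\<Sum>z\<in>S. \<Sum>w\<in>S. \<bar>L u w z\<bar>)"

definition defect_size :: "'r \<Rightarrow> real \<Rightarrow> real" where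
  "defect_size y u = (\<Sum>z\<in>S. \<bar>gen_defect y u z\<bar>)"

lemma lift_gen_set_integrable:
  "z \<in> S \<Longrightarrow> 0 \<le> s \<Longrightarrow> s \<le> t \<Longrightarrow> set_integrable lborel {s..t} (\<lambda>u. lift_gen y u z)"
  unfolding lift_gen_def by (rule gen_apply_set_integrable[OF generator_X finite_states])

lemma proj_gen_set_integrable:
  "z \<in> S \<Longrightarrow> 0 \<le> s \<Longrightarrow> s \<le> t \<Longrightarrow> set_integrable lborel {s..t} (\<lambda>u. proj_gen y u z)"
  unfolding proj_gen_def by (rule gen_apply_set_integrable[OF generator_Y finite_Si cd_states])

lemma gen_defect_set_integrable:
  "z \<in> S \<Longrightarrow> 0 \<le> s \<Longrightarrow> s \<le> t \<Longrightarrow> set_integrable lborel {s..t} (\<lambda>u. gen_defect y u z)"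
  unfolding gen_defect_def using lift_gen_set_integrable proj_gen_set_integrable
  by (intro set_integral_diff(1))

lemma jump_rate_set_integrable:
  assumes "0 \<le> s" "s \<le> t" shows "set_integrable lborel {s..t} jump_rate"
  unfolding jump_rate_def using finite_states
  by (intro set_integrable_sum set_integrable_abs generator_entry_set_integrable[OF generator_X _ _ assms])

lemma defect_size_set_integrable:
  assumes "0 \<le> s" "s \<le> t" shows "set_integrable lborel {s..t} (defect_size y)"
  unfolding defect_size_def using finite_states gen_defect_set_integrable assms
  by (intro set_integrable_sum set_integrable_abs)

lemma defect_set_integrable:
  assumes "0 \<le> s" "s \<le> t" shows "set_integrable lborel {s..t} (defect x y)"
proof -
  define G where "G = (\<lambda>u z. if cd z = x then gen_defect y u z else 0)"
  have "defect x y u = (\<Sum>z\<in>S. G u z * prob (space M \<inter> ev M X u z))" for u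
    unfolding defect_def G_def
  proof (intro sum.cong refl)
    fix z
    have "ev M Y u x \<inter> ev M X u z = (if cd z = x then space M \<inter> ev M X u z else {})"
      by (auto simp: ev_def Y_eq)
    then show "gen_defect y u z * prob (ev M Y u x \<inter> ev M X u z)
        = (if cd z = x then gen_defect y u z else 0) * prob (space M \<inter> ev M X u z)"
      by simp
  qed
  moreover have "set_integrable lborel {s..t} (\<lambda>u. G u z)" if "z \<in> S" for z
    unfolding G_def using gen_defect_set_integrable[OF that assms]
    by (cases "cd z = x") (auto simp: set_integrable_def)
  ultimately show ?thesis
    using time_integral_exchange(2)[OF assms sets.top] by presburger
qed

text \<open>Step 1: both generators compensate the process 1{Y_t = y}, so the defect with the event
  {Y_s = x} frozen at time s integrates to zero over [s, t].\<close>
lemma frozen_defect_integral_zero: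
  assumes st: "0 \<le> s" "s \<le> t"
  shows "set_lebesgue_integral lborel {s..t} (frozen_defect x y s) = 0"
proof -
  define A where "A = ev M Y s x"
  have A: "A \<in> sets (nat_filt M X s)" "A \<in> sets (nat_filt M Y s)" "A \<in> sets M"
    unfolding A_def using Y_event_in_filtrations[OF st(1)] Y_event[OF st(1)] by auto
  note lift = time_integral_exchange[OF st A(3), of "lift_gen y"]
  note proj = time_integral_exchange[OF st A(3), of "proj_gen y"]
  have "(\<integral>\<omega>. indicator A \<omega> * set_lebesgue_integral lborel {s..t} (\<lambda>u. lift_gen y u (X u \<omega>)) \<partial>M)
      = (\<integral>\<omega>. indicator A \<omega> * set_lebesgue_integral lborel {s..t} (\<lambda>u. proj_gen y u (X u \<omega>)) \<partial>M)"
    using dynkin_X[OF st A(1,3), of "\<lambda>w. if cd w = y then 1 else 0"]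
      dynkin_Y[OF st A(2,3), of "\<lambda>v. if v = y then 1 else 0"]
    by (simp add: lift_gen_def proj_gen_def Y_eq)
  then have "set_lebesgue_integral lborel {s..t} (\<lambda>u. \<Sum>z\<in>S. lift_gen y u z * prob (A \<inter> ev M X u z))
      = set_lebesgue_integral lborel {s..t} (\<lambda>u. \<Sum>z\<in>S. proj_gen y u z * prob (A \<inter> ev M X u z))"
    using lift(1) proj(1) lift_gen_set_integrable proj_gen_set_integrable st by simp
  moreover have "frozen_defect x y s = (\<lambda>u. (\<Sum>z\<in>S. lift_gen y u z * prob (A \<inter> ev M X u z))
      - (\<Sum>z\<in>S. proj_gen y u z * prob (A \<inter> ev M X u z)))"
    by (simp add: fun_eq_iff frozen_defect_def gen_defect_def A_def left_diff_distrib sum_subtractf)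
  ultimately show ?thesis
    using set_integral_diff(2)[OF lift(2) proj(2)] lift_gen_set_integrable proj_gen_set_integrable st
    by simp
qed

text \<open>Step 2a: the probability of leaving state z during [s, u] is bounded by the integrated
  rate of the transitions into z (Dynkin's formula for the indicator of z).\<close>
lemma leave_state_bound:
  assumes z: "z \<in> S" and su: "0 \<le> s" "s \<le> u"
  shows "prob (ev M X s z - ev M X u z) \<le> set_lebesgue_integral lborel {s..u} (\<lambda>v. \<Sum>w\<in>S. \<bar>L v w z\<bar>)"
proof -
  define A where "A = ev M X s z"
  define d where "d = (\<lambda>w::'s. if w = z then 1 else (0::real))"
  define R where "R = (\<lambda>v. \<Sum>w\<in>S. gen_apply S L v d w * prob (A \<inter> ev M X v w))"
  have A: "A \<in> sets (nat_filt M X s)" "A \<in> sets M"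
    unfolding A_def using su ev_in_nat_filt[of s s M X z] state_event by auto
  have state_prob: "(\<integral>\<omega>. indicator A \<omega> * d (X v \<omega>) \<partial>M) = prob (A \<inter> ev M X v z)" if "0 \<le> v" for v
    using integral_indicator_state[OF that A(2), of d] z finite_states
    by (simp add: d_def if_distrib[of "\<lambda>c. c * _"] cong: if_cong)
  have gen_d: "gen_apply S L v d w = L v w z" for v w
    unfolding gen_apply_def d_def using finite_states z by (simp add: if_distrib cong: if_cong)
  note exchange = time_integral_exchange[OF su A(2), of "\<lambda>v w. gen_apply S L v d w", folded R_def]
  have R_int: "set_integrable lborel {s..u} R"
    using exchange(2) gen_apply_set_integrable[OF generator_X finite_states _ su] by blast
  have "prob (ev M X s z - ev M X u z) = prob A - prob (A \<inter> ev M X u z)"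
    unfolding A_def using state_event su by (subst finite_measure_Diff') auto
  also have "\<dots> = - (\<integral>\<omega>. indicator A \<omega> * (d (X u \<omega>) - d (X s \<omega>)) \<partial>M)"
  proof -
    have "A \<inter> ev M X s z = A" by (simp add: A_def)
    then show ?thesis
      using state_prob[of u] state_prob[of s] su A(2)
        integrable_real_mult_indicator[OF A(2) integrable_state_function[of u d]]
        integrable_real_mult_indicator[OF A(2) integrable_state_function[of s d]]
      by (simp add: right_diff_distrib Bochner_Integration.integral_diff mult.commute)
  qed
  also have "\<dots> = - set_lebesgue_integral lborel {s..u} R"
    using dynkin_X[OF su A] exchange(1) gen_apply_set_integrable[OF generator_X finite_states _ su]
    by simp
  also have "\<dots> \<le> set_lebesgue_integral lborel {s..u} (\<lambda>v. \<bar>R v\<bar>)"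
    using set_integral_norm_bound[OF R_int] by simp
  also have "\<dots> \<le> set_lebesgue_integral lborel {s..u} (\<lambda>v. \<Sum>w\<in>S. \<bar>L v w z\<bar>)"
  proof (rule set_integral_mono)
    show "set_integrable lborel {s..u} (\<lambda>v. \<bar>R v\<bar>)" using R_int by (rule set_integrable_abs)
    show "set_integrable lborel {s..u} (\<lambda>v. \<Sum>w\<in>S. \<bar>L v w z\<bar>)"
      using finite_states z su
      by (intro set_integrable_sum set_integrable_abs generator_entry_set_integrable[OF generator_X]) auto
    fix v
    have "\<bar>R v\<bar> \<le> (\<Sum>w\<in>S. \<bar>L v w z * prob (A \<inter> ev M X v w)\<bar>)"
      unfolding R_def gen_d by (rule sum_abs)
    also have "\<dots> \<le> (\<Sum>w\<in>S. \<bar>L v w z\<bar>)"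
      by (intro sum_mono) (simp add: abs_mult mult_left_le)
    finally show "\<bar>R v\<bar> \<le> (\<Sum>w\<in>S. \<bar>L v w z\<bar>)" .
  qed
  finally show ?thesis .
qed

lemma jump_probability_bound:
  assumes su: "0 \<le> s" "s \<le> u"
  shows "prob {\<omega> \<in> space M. X s \<omega> \<noteq> X u \<omega>} \<le> set_lebesgue_integral lborel {s..u} jump_rate"
proof -
  have entry_int: "set_integrable lborel {s..u} (\<lambda>v. \<Sum>w\<in>S. \<bar>L v w z\<bar>)" if "z \<in> S" for z
    using finite_states that su
    by (intro set_integrable_sum set_integrable_abs generator_entry_set_integrable[OF generator_X]) auto
  have "{\<omega> \<in> space M. X s \<omega> \<noteq> X u \<omega>} \<subseteq> (\<Union>z\<in>S. ev M X s z - ev M X u z)"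
    using in_states su by (auto simp: ev_def)
  then have "prob {\<omega> \<in> space M. X s \<omega> \<noteq> X u \<omega>} \<le> prob (\<Union>z\<in>S. ev M X s z - ev M X u z)"
    using finite_states state_event su by (intro finite_measure_mono) auto
  also have "\<dots> \<le> (\<Sum>z\<in>S. prob (ev M X s z - ev M X u z))"
    using finite_states state_event su by (intro finite_measure_subadditive_finite) auto
  also have "\<dots> \<le> (\<Sum>z\<in>S. set_lebesgue_integral lborel {s..u} (\<lambda>v. \<Sum>w\<in>S. \<bar>L v w z\<bar>))"
    using leave_state_bound su by (intro sum_mono) auto
  also have "\<dots> = set_lebesgue_integral lborel {s..u} jump_rate"
    unfolding jump_rate_def using set_integral_sum[OF finite_states entry_int] by simp
  finally show ?thesis .
qed

text \<open>Step 2c: replacing the event {Y_s = x} by {Y_u = x} changes the defect at time u by at most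
  the defect size times the probability of a jump, bounded by the integrated jump rate.\<close>
lemma unfreeze_error:
  assumes u: "0 \<le> s" "s \<le> u" "u \<le> t"
  shows "\<bar>defect x y u - frozen_defect x y s u\<bar>
           \<le> defect_size y u * set_lebesgue_integral lborel {s..t} jump_rate"
proof -
  define D where "D = {\<omega> \<in> space M. X s \<omega> \<noteq> X u \<omega>}"
  define K where "K = set_lebesgue_integral lborel {s..t} jump_rate"
  have D: "D \<in> sets M"
  proof -
    have "D = space M - (\<Union>z\<in>S. ev M X s z \<inter> ev M X u z)"
      using in_states u by (auto simp: D_def ev_def)
    also have "\<dots> \<in> sets M"
      using finite_states state_event u by (intro sets.Diff sets.finite_UN sets.Int) auto
    finally show ?thesis .
  qed
  have "prob D \<le> set_lebesgue_integral lborel {s..u} jump_rate"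
    unfolding D_def using u by (intro jump_probability_bound) auto
  also have "\<dots> \<le> K"
    unfolding K_def set_lebesgue_integral_def
  proof (rule integral_mono)
    show "integrable lborel (\<lambda>v. indicator {s..u} v *\<^sub>R jump_rate v)"
         "integrable lborel (\<lambda>v. indicator {s..t} v *\<^sub>R jump_rate v)"
      using jump_rate_set_integrable u by (auto simp: set_integrable_def)
    show "indicator {s..u} v *\<^sub>R jump_rate v \<le> indicator {s..t} v *\<^sub>R jump_rate v" for v
      using u by (auto simp: indicator_def jump_rate_def intro: sum_nonneg)
  qed
  finally have pD: "prob D \<le> K" .
  have event_change: "\<bar>prob (ev M Y u x \<inter> ev M X u z) - prob (ev M Y s x \<inter> ev M X u z)\<bar> \<le> K" for z
  proof -
    have "\<bar>prob (ev M Y u x \<inter> ev M X u z) - prob (ev M Y s x \<inter> ev M X u z)\<bar> \<le> prob D"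
      using Y_event state_event D u by (intro prob_diff_le_disagreement) (auto simp: D_def ev_def Y_eq)
    with pD show ?thesis by linarith
  qed
  have "\<bar>defect x y u - frozen_defect x y s u\<bar>
      = \<bar>\<Sum>z\<in>S. gen_defect y u z * (prob (ev M Y u x \<inter> ev M X u z) - prob (ev M Y s x \<inter> ev M X u z))\<bar>"
    unfolding defect_def frozen_defect_def by (simp add: sum_subtractf right_diff_distrib)
  also have "\<dots> \<le> (\<Sum>z\<in>S. \<bar>gen_defect y u z\<bar> * K)"
    using event_change
    by (intro order_trans[OF sum_abs] sum_mono) (simp add: abs_mult mult_left_mono)
  finally show ?thesis by (simp add: defect_size_def K_def sum_distrib_right)
qed

lemma defect_local_bound:
  assumes "0 \<le> s" "0 \<le> h"
  shows "\<bar>set_lebesgue_integral lborel {s..s+h} (defect x y)\<bar>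
          \<le> set_lebesgue_integral lborel {s..s+h} jump_rate * set_lebesgue_integral lborel {s..s+h} (defect_size y)"
proof -
  define t where "t = s + h"
  have st: "0 \<le> s" "s \<le> t" using assms by (auto simp: t_def)
  define K where "K = set_lebesgue_integral lborel {s..t} jump_rate"
  have frozen_int: "set_integrable lborel {s..t} (frozen_defect x y s)"
    using time_integral_exchange(2)[OF st Y_event[OF st(1)], of "gen_defect y"]
      gen_defect_set_integrable st
    by (simp add: frozen_defect_def[abs_def])
  have diff_int: "set_integrable lborel {s..t} (\<lambda>u. defect x y u - frozen_defect x y s u)"
    using defect_set_integrable[OF st] frozen_int by (rule set_integral_diff(1))
  have "set_lebesgue_integral lborel {s..t} (defect x y)
      = set_lebesgue_integral lborel {s..t} (\<lambda>u. defect x y u - frozen_defect x y s u)"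
    using set_integral_diff(2)[OF defect_set_integrable[OF st] frozen_int]
      frozen_defect_integral_zero[OF st] by simp
  then have "\<bar>set_lebesgue_integral lborel {s..t} (defect x y)\<bar>
      \<le> set_lebesgue_integral lborel {s..t} (\<lambda>u. \<bar>defect x y u - frozen_defect x y s u\<bar>)"
    using set_integral_norm_bound[OF diff_int] by simp
  also have "\<dots> \<le> set_lebesgue_integral lborel {s..t} (\<lambda>u. defect_size y u * K)"
  proof (rule set_integral_mono)
    show "set_integrable lborel {s..t} (\<lambda>u. \<bar>defect x y u - frozen_defect x y s u\<bar>)"
      by (rule set_integrable_abs[OF diff_int])
    show "set_integrable lborel {s..t} (\<lambda>u. defect_size y u * K)"
      using defect_size_set_integrable[OF st] by (rule set_integrable_mult_left)
    show "\<bar>defect x y u - frozen_defect x y s u\<bar> \<le> defect_size y u * K" if "u \<in> {s..t}" for u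
      using unfreeze_error[of s u t] that st by (simp add: K_def)
  qed
  also have "\<dots> = set_lebesgue_integral lborel {s..t} (defect_size y) * K"
    by (rule set_integral_mult_left)
  finally show ?thesis unfolding K_def t_def by (simp only: mult.commute)
qed

lemma defect_ae_zero: "AE t in lborel. 0 \<le> t \<longrightarrow> defect x y t = 0"
  using defect_set_integrable jump_rate_set_integrable defect_size_set_integrable
  by (intro ae_zero_from_local_bound[OF _ _ _ defect_local_bound]) auto

lemma gen_apply_lift:
  "gen_apply S L t (\<lambda>p. g (cd p)) z = (\<Sum>y\<in>Si. g y * lift_gen y t z)"
proof -
  have "(\<Sum>y\<in>Si. g y * lift_gen y t z)
      = (\<Sum>y\<in>Si. \<Sum>w\<in>S. L t z w * (g y * (if cd w = y then 1 else 0)))"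
    unfolding lift_gen_def gen_apply_def by (simp add: sum_distrib_left mult_ac)
  also have "\<dots> = (\<Sum>w\<in>S. L t z w * (\<Sum>y\<in>Si. g y * (if cd w = y then 1 else 0)))"
    by (subst sum.swap) (simp add: sum_distrib_left)
  also have "\<dots> = (\<Sum>w\<in>S. L t z w * g (cd w))"
  proof (intro sum.cong refl)
    fix w assume "w \<in> S"
    have "(\<Sum>y\<in>Si. g y * (if cd w = y then 1 else 0)) = (\<Sum>y\<in>Si. if cd w = y then g y else 0)"
      by (intro sum.cong) auto
    also have "\<dots> = g (cd w)" using finite_Si cd_states[OF \<open>w \<in> S\<close>] by simp
    finally show "L t z w * (\<Sum>y\<in>Si. g y * (if cd w = y then 1 else 0)) = L t z w * g (cd w)" by simp
  qed
  finally show ?thesis by (simp add: gen_apply_def)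
qed

text \<open>On the event {Y_t = x} the generator of Y is read at x, so weighting its action on 1{y}
  by the joint state probabilities gives Li t x y times the probability of the event.\<close>
lemma proj_gen_expectation:
  assumes t: "0 \<le> t" and y: "y \<in> Si"
  shows "(\<Sum>z\<in>S. proj_gen y t z * prob (ev M Y t x \<inter> ev M X t z)) = Li t x y * prob (ev M Y t x)"
proof -
  have weighted: "proj_gen y t z * prob (ev M Y t x \<inter> ev M X t z) = Li t x y * prob (ev M Y t x \<inter> ev M X t z)"
    if "z \<in> S" for z
  proof (cases "cd z = x")
    case True
    have "proj_gen y t z = (\<Sum>v\<in>Si. if v = y then Li t (cd z) v else 0)"
      unfolding proj_gen_def gen_apply_def by (intro sum.cong) auto
    with True show ?thesis using finite_Si y by simp
  next
    case False
    then have "ev M Y t x \<inter> ev M X t z = {}" by (auto simp: ev_def Y_eq)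
    then show ?thesis by simp
  qed
  have "(\<Sum>z\<in>S. proj_gen y t z * prob (ev M Y t x \<inter> ev M X t z))
      = (\<Sum>z\<in>S. Li t x y * prob (ev M Y t x \<inter> ev M X t z))"
    by (rule sum.cong[OF refl weighted])
  also have "\<dots> = Li t x y * (\<Sum>z\<in>S. prob (ev M Y t x \<inter> ev M X t z))"
    by (simp add: sum_distrib_left)
  also have "(\<Sum>z\<in>S. prob (ev M Y t x \<inter> ev M X t z)) = prob (ev M Y t x)"
    using integral_indicator_state[OF t Y_event[OF t], where F = "\<lambda>_. 1"] Y_event[OF t] by simp
  finally show ?thesis .
qed

lemma conditional_generator_identity:
  assumes t: "0 \<le> t" and pos: "prob (ev M Y t x) > 0" and no_defect: "\<And>y. y \<in> Si \<Longrightarrow> defect x y t = 0"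
  shows "Qop M X Y t (gen_apply S L t (\<lambda>p. g (cd p))) x = (\<Sum>y\<in>Si. Li t x y * g y)"
proof -
  define p where "p = (\<lambda>z. prob (ev M Y t x \<inter> ev M X t z))"
  have lift_eq_proj: "(\<Sum>z\<in>S. lift_gen y t z * p z) = (\<Sum>z\<in>S. proj_gen y t z * p z)" if "y \<in> Si" for y
    using no_defect[OF that]
    by (simp add: defect_def gen_defect_def p_def left_diff_distrib sum_subtractf)
  have "(\<integral>\<omega>. indicator (ev M Y t x) \<omega> * gen_apply S L t (\<lambda>p. g (cd p)) (X t \<omega>) \<partial>M)
      = (\<Sum>z\<in>S. (\<Sum>y\<in>Si. g y * lift_gen y t z) * p z)"
    using integral_indicator_state[OF t Y_event[OF t]] by (simp add: gen_apply_lift p_def)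
  also have "\<dots> = (\<Sum>z\<in>S. \<Sum>y\<in>Si. g y * (lift_gen y t z * p z))"
    by (simp add: sum_distrib_right mult.assoc)
  also have "\<dots> = (\<Sum>y\<in>Si. g y * (\<Sum>z\<in>S. lift_gen y t z * p z))"
    by (subst sum.swap) (simp add: sum_distrib_left)
  also have "\<dots> = (\<Sum>y\<in>Si. g y * (Li t x y * prob (ev M Y t x)))"
    using lift_eq_proj proj_gen_expectation[OF t] by (simp add: p_def)
  also have "\<dots> = (\<Sum>y\<in>Si. Li t x y * g y) * prob (ev M Y t x)"
    by (simp add: sum_distrib_left sum_distrib_right mult_ac)
  finally show ?thesis
    using pos by (simp add: Qop_def)
qed

lemma generator_projection_ae:
  "AE t in lborel. 0 \<le> t \<longrightarrow> (\<forall>g x. x \<in> Si \<and> prob (ev M Y t x) > 0 \<longrightarrow>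
      Qop M X Y t (gen_apply S L t (\<lambda>p. g (cd p))) x = (\<Sum>y\<in>Si. Li t x y * g y))"
proof -
  have "AE t in lborel. \<forall>x\<in>Si. \<forall>y\<in>Si. 0 \<le> t \<longrightarrow> defect x y t = 0"
    using finite_Si defect_ae_zero by (intro eventually_ball_finite ballI) auto
  then show ?thesis
    by eventually_elim (auto intro: conditional_generator_identity)
qed

end


theorem theorem1p3:
  fixes M :: "'a measure"
    and S1 S2 :: "real set"
    and X1 X2 :: "real \<Rightarrow> 'a \<Rightarrow> real"
    and L :: "real \<Rightarrow> real \<times> real \<Rightarrow> real \<times> real \<Rightarrow> real"
    and i :: nat
    and Li :: "real \<Rightarrow> real \<Rightarrow> real \<Rightarrow> real"
  assumes "prob_space M"
    and "finite S1" and "finite S2"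
    and "cadlag M (\<lambda>t \<omega>. (X1 t \<omega>, X2 t \<omega>))"
    and "markov_chain_gen M (S1 \<times> S2) (\<lambda>t \<omega>. (X1 t \<omega>, X2 t \<omega>)) L"
    and "i \<in> {1, 2}"
    and "markov_chain_gen M (if i = 1 then S1 else S2) (\<lambda>t \<omega>. coord i (X1 t \<omega>, X2 t \<omega>)) Li"
  shows "AE t in lborel. 0 \<le> t \<longrightarrow>
           (\<forall>g xi. xi \<in> (if i = 1 then S1 else S2) \<and>
                   measure M (ev M (\<lambda>t \<omega>. coord i (X1 t \<omega>, X2 t \<omega>)) t xi) > 0 \<longrightarrow>
              Qop M (\<lambda>t \<omega>. (X1 t \<omega>, X2 t \<omega>)) (\<lambda>t \<omega>. coord i (X1 t \<omega>, X2 t \<omega>)) t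
                  (gen_apply (S1 \<times> S2) L t (Cext i g)) xi
              = (\<Sum>yi\<in>(if i = 1 then S1 else S2). Li t xi yi * g yi))"
proof -
  interpret projected_chain M "S1 \<times> S2" "\<lambda>t \<omega>. (X1 t \<omega>, X2 t \<omega>)" L
      "if i = 1 then S1 else S2" "\<lambda>t \<omega>. coord i (X1 t \<omega>, X2 t \<omega>)" Li "coord i"
  proof (intro projected_chain.intro projected_chain_axioms.intro assms(1,5,7))
    show "continuous (at_right t) (\<lambda>u. (X1 u \<omega>, X2 u \<omega>))" if "0 \<le> t" "\<omega> \<in> space M" for t \<omega>
      using assms(4) that unfolding cadlag_def by blast
    show "coord i z \<in> (if i = 1 then S1 else S2)" if "z \<in> S1 \<times> S2" for z
      using that by (auto simp: coord_def)
  qed simp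
  show ?thesis
    using generator_projection_ae unfolding Cext_def by simp
qed

end
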